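(* Let $\mathcal N$ be an associative algebra over a field of characteristic $\neq 2$, let $H\in\mathcal N$, and for $F\in\mathcal N$ write $\dot F=[F,H]$ and $\ddot F=\dot{(\dot F)}$. Let $X_1,\dots,X_d\in\mathcal N$ and set $g_{ij}=[X_i,\dot X_j]$. Assume $[X_i,g_{jk}]=0$ for all $i,j,k$. Define $\nabla_i(F)=[F,\dot X_i]$ and $$\Gamma_{kij}=\tfrac12\big(\nabla_i g_{jk}+\nabla_j g_{ik}-\nabla_k g_{ij}\big).$$ Then for all $i,j,k$, $$\Gamma_{kij}=\tfrac12\,[X_i,[X_j,\ddot X_k]].$$
   Context: $[A,B]=AB-BA$ denotes the commutator. *)

theory Defs
  imports Main "HOL.Vector_Spaces"
begin

definition comm :: "'a::ring \<Rightarrow> 'a \<Rightarrow> 'a" where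
  "comm A B = A * B - B * A"

definition assoc_algebra :: "('k::field \<Rightarrow> 'a::ring \<Rightarrow> 'a) \<Rightarrow> bool" where
  "assoc_algebra s \<longleftrightarrow> module s \<and>
     (\<forall>c x y. s c (x * y) = s c x * y) \<and> (\<forall>c x y. s c (x * y) = x * s c y)"

definition tdot :: "'a::ring \<Rightarrow> 'a \<Rightarrow> 'a" where
  "tdot H F = comm F H"

definition metric :: "'a::ring \<Rightarrow> (nat \<Rightarrow> 'a) \<Rightarrow> nat \<Rightarrow> nat \<Rightarrow> 'a" where
  "metric H X i j = comm (X i) (tdot H (X j))"

definition nabla :: "'a::ring \<Rightarrow> (nat \<Rightarrow> 'a) \<Rightarrow> nat \<Rightarrow> 'a \<Rightarrow> 'a" where
  "nabla H X i F = comm F (tdot H (X i))"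

definition christoffel :: "('k::field \<Rightarrow> 'a::ring \<Rightarrow> 'a) \<Rightarrow> 'a \<Rightarrow> (nat \<Rightarrow> 'a) \<Rightarrow> nat \<Rightarrow> nat \<Rightarrow> nat \<Rightarrow> 'a" where
  "christoffel s H X k i j =
     s (1/2) (nabla H X i (metric H X j k) + nabla H X j (metric H X i k) - nabla H X k (metric H X i j))"

end

theory Submission
  imports Defs
begin

text \<open>Taking the time derivative of the constraint [X_i, g_jk] = 0 by the Leibniz rule and
  rewriting the two first-order terms with the Jacobi identity turns the combination
  of covariant derivatives defining \<Gamma>_kij into [X_i, [X_j, X_k-double-dot]] minus that vanishing
  derivative. The identity holds in any ring.\<close>

lemma comm_antisym: "comm A B = - comm B (A::'a::ring)"
  by (simp add: comm_def)

lemma comm_add_right: "comm A (B + C) = comm A B + comm A (C::'a::ring)"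
  by (simp add: comm_def algebra_simps)

lemma comm_minus_right: "comm A (- B) = - comm A (B::'a::ring)"
  by (simp add: comm_def)

lemma comm_Jacobi: "comm (comm A B) C - comm (comm A C) B = comm A (comm B (C::'a::ring))"
  by (simp add: comm_def algebra_simps)

lemma tdot_comm: "tdot H (comm A B) = comm (tdot H A) B + comm A (tdot H (B::'a::ring))"
  by (simp add: tdot_def comm_def algebra_simps)

lemma christoffel_numerator:
  fixes H :: "'a::ring"
  shows "nabla H X i (metric H X j k) + nabla H X j (metric H X i k) - nabla H X k (metric H X i j)
       = comm (X i) (comm (X j) (tdot H (tdot H (X k)))) - tdot H (comm (X i) (metric H X j k))"
proof -
  have jacobi: "nabla H X j (metric H X i k) - nabla H X k (metric H X i j)
              = - comm (X i) (comm (tdot H (X j)) (tdot H (X k)))"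
    using comm_Jacobi[of "X i" "tdot H (X k)" "tdot H (X j)"]
    by (simp add: nabla_def metric_def comm_antisym[of "tdot H (X k)"] comm_minus_right)
  have leibniz: "tdot H (comm (X i) (metric H X j k))
      = comm (tdot H (X i)) (metric H X j k) + comm (X i) (comm (tdot H (X j)) (tdot H (X k)))
        + comm (X i) (comm (X j) (tdot H (tdot H (X k))))"
    by (simp add: metric_def tdot_comm comm_add_right)
  have "nabla H X i (metric H X j k) = - comm (tdot H (X i)) (metric H X j k)"
    by (simp add: nabla_def comm_antisym[of "metric H X j k"])
  with jacobi leibniz show ?thesis
    by (simp add: algebra_simps)
qed

theorem lemma3p1:
  fixes s :: "'k::field \<Rightarrow> 'a::ring \<Rightarrow> 'a" and H :: 'a and X :: "nat \<Rightarrow> 'a" and d :: nat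
  assumes alg: "assoc_algebra s"
    and char: "(2::'k) \<noteq> 0"
    and hyp: "\<forall>i\<in>{1..d}. \<forall>j\<in>{1..d}. \<forall>k\<in>{1..d}. comm (X i) (metric H X j k) = 0"
  shows "\<forall>i\<in>{1..d}. \<forall>j\<in>{1..d}. \<forall>k\<in>{1..d}.
           christoffel s H X k i j = s (1/2) (comm (X i) (comm (X j) (tdot H (tdot H (X k)))))"
proof (intro ballI)
  fix i j k assume "i \<in> {1..d}" "j \<in> {1..d}" "k \<in> {1..d}"
  with hyp have "tdot H (comm (X i) (metric H X j k)) = 0"
    by (simp add: tdot_def comm_def)
  then show "christoffel s H X k i j = s (1/2) (comm (X i) (comm (X j) (tdot H (tdot H (X k)))))"
    by (simp add: christoffel_def christoffel_numerator)
qed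

end
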